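(* Let $\mathbf{V}\in\mathbb{R}^{n\times(k+1)}$ have full column rank and let $e_1>0$ be the smallest eigenvalue of $\mathbf{V}^\top\mathbf{V}$. Suppose $\mathbf{W}\in\mathbb{R}^{k\times(k+1)}$ satisfies $$\max_{i\in[n]}\Big\{\min_{l\in[k]}\|\mathbf{V}_{i,:}-\mathbf{W}_{l,:}\|\Big\}=\epsilon.$$ Then $\epsilon\ge\sqrt{e_1}\,(3n(k+1)^2)^{-1}$.
   Context: $[n]=\{1,\dots,n\}$; $\|\cdot\|$ is the Euclidean norm; $\mathbf{V}_{i,:}$ denotes the $i$-th row of $\mathbf{V}$. *)

theory Defs
  imports "HOL-Analysis.Analysis"
begin

definition is_eigenvalue :: "real^'m^'m \<Rightarrow> real \<Rightarrow> bool" where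
  "is_eigenvalue A mu \<longleftrightarrow> (\<exists>v. v \<noteq> 0 \<and> A *v v = mu *\<^sub>R v)"

definition is_smallest_eigenvalue :: "real^'m^'m \<Rightarrow> real \<Rightarrow> bool" where
  "is_smallest_eigenvalue A e \<longleftrightarrow>
     is_eigenvalue A e \<and> (\<forall>mu. is_eigenvalue A mu \<longrightarrow> e \<le> mu)"

end

theory Submission
  imports Defs
begin

text \<open>Since W has only k rows in dimension k + 1, some unit vector u is orthogonal to all of
  them. Then (V u) i = (V i - W l) \<bullet> u for every row index l, so every entry of V u is
  bounded by eps in absolute value. The smallest eigenvalue of V^T V is the minimum of |V x|^2
  on the unit sphere, hence e1 \<le> |V u|^2 \<le> n eps^2, i.e. sqrt e1 \<le> sqrt n eps, which is
  stronger than the claimed bound.\<close>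

lemma linear_coeff_zero_if_quadratic_nonneg:
  fixes a b :: real
  assumes "\<And>t. 0 \<le> a * t + b * t\<^sup>2"
  shows "a = 0"
proof (rule ccontr)
  assume "a \<noteq> 0"
  define s where "s = 1 / (\<bar>b\<bar> + 1)"
  have "s > 0" and "b * s < 1"
    unfolding s_def by (auto simp: field_simps)
  have "a * (- a * s) + b * (- a * s)\<^sup>2 = a\<^sup>2 * s * (b * s - 1)"
    by (simp add: power2_eq_square algebra_simps)
  also have "\<dots> < 0"
    using \<open>a \<noteq> 0\<close> \<open>s > 0\<close> \<open>b * s < 1\<close> by (intro mult_pos_neg) auto
  finally show False
    using assms[of "- a * s"] by simp
qed

lemma exists_unit_orthogonal_to_finite_set:
  fixes S :: "'a::euclidean_space set"
  assumes "finite S" and "card S < DIM('a)"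
  obtains u where "norm u = 1" and "\<And>y. y \<in> S \<Longrightarrow> inner u y = 0"
proof -
  have "dim S < DIM('a)"
    using dim_le_card'[OF \<open>finite S\<close>] assms(2) by linarith
  then obtain u0 where "u0 \<noteq> 0" and "\<And>y. y \<in> span S \<Longrightarrow> orthogonal u0 y"
    using orthogonal_to_subspace_exists by blast
  then show thesis
    by (intro that[of "u0 /\<^sub>R norm u0"]) (auto simp: orthogonal_def span_base)
qed

lemma inner_matrix_vector_mult_transpose:
  fixes V :: "real^'c^'n"
  shows "inner (V *v x) (V *v y) = inner x ((transpose V ** V) *v y)"
  by (metis dot_lmul_matrix matrix_vector_mul_assoc vector_transpose_matrix)

lemma norm_matrix_vector_mult_attains_min_on_sphere:
  fixes V :: "real^'c^'n"
  obtains u where "norm u = 1" and "\<And>x. (norm (V *v u))\<^sup>2 * (norm x)\<^sup>2 \<le> (norm (V *v x))\<^sup>2"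
proof -
  have "continuous_on (sphere (0::real^'c) 1) (\<lambda>x. (norm (V *v x))\<^sup>2)"
    by (intro continuous_intros)
  then obtain u where u: "u \<in> sphere 0 1"
    and minimal: "\<And>y. y \<in> sphere 0 1 \<Longrightarrow> (norm (V *v u))\<^sup>2 \<le> (norm (V *v y))\<^sup>2"
    using continuous_attains_inf[of "sphere (0::real^'c) 1"] by fastforce
  have "(norm (V *v u))\<^sup>2 * (norm x)\<^sup>2 \<le> (norm (V *v x))\<^sup>2" for x
  proof (cases "x = 0")
    case False
    then have "(norm (V *v u))\<^sup>2 \<le> (norm (V *v (x /\<^sub>R norm x)))\<^sup>2"
      by (intro minimal) simp
    also have "\<dots> = (norm (V *v x))\<^sup>2 / (norm x)\<^sup>2"
      by (simp add: matrix_vector_mult_scaleR power_mult_distrib field_simps)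
    finally show ?thesis
      using False by (simp add: field_simps)
  qed simp
  with u show thesis
    by (intro that) auto
qed

text \<open>With m = |V u|^2 the quadratic form q x = |V x|^2 - m |x|^2 is nonnegative and vanishes
  at u; for r = V^T V u - m u this gives 0 \<le> q (u + t r) = 2 t |r|^2 + t^2 q r for all t,
  which forces r = 0.\<close>

lemma norm_minimizer_is_eigenvector:
  fixes V :: "real^'c^'n"
  assumes "norm u = 1"
    and minimal: "\<And>x. (norm (V *v u))\<^sup>2 * (norm x)\<^sup>2 \<le> (norm (V *v x))\<^sup>2"
  shows "(transpose V ** V) *v u = (norm (V *v u))\<^sup>2 *\<^sub>R u"
proof -
  define m where "m = (norm (V *v u))\<^sup>2"
  define r where "r = (transpose V ** V) *v u - m *\<^sub>R u"
  have "inner u u = 1"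
    using \<open>norm u = 1\<close> by (simp add: dot_square_norm)
  have "inner (V *v r) (V *v u) - m * inner r u = inner r r"
    using inner_matrix_vector_mult_transpose[of V r u] by (simp add: r_def inner_diff_right)
  moreover have "(norm (V *v (u + t *\<^sub>R r)))\<^sup>2 - m * (norm (u + t *\<^sub>R r))\<^sup>2
      = 2 * (inner (V *v r) (V *v u) - m * inner r u) * t
        + ((norm (V *v r))\<^sup>2 - m * (norm r)\<^sup>2) * t\<^sup>2" for t
    using \<open>inner u u = 1\<close> unfolding m_def power2_norm_eq_inner
    by (simp add: matrix_vector_right_distrib matrix_vector_mult_scaleR inner_add_left
        inner_add_right inner_commute power2_eq_square algebra_simps)
  ultimately have expand: "(norm (V *v (u + t *\<^sub>R r)))\<^sup>2 - m * (norm (u + t *\<^sub>R r))\<^sup>2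
      = 2 * inner r r * t + ((norm (V *v r))\<^sup>2 - m * (norm r)\<^sup>2) * t\<^sup>2" for t
    by simp
  have "0 \<le> 2 * inner r r * t + ((norm (V *v r))\<^sup>2 - m * (norm r)\<^sup>2) * t\<^sup>2" for t
    using minimal[of "u + t *\<^sub>R r"] expand[of t] unfolding m_def by linarith
  then have "2 * inner r r = 0"
    by (rule linear_coeff_zero_if_quadratic_nonneg)
  then show ?thesis
    by (simp add: r_def m_def)
qed

lemma smallest_eigenvalue_le_norm_matrix_vector_mult:
  fixes V :: "real^'c^'n"
  assumes "is_smallest_eigenvalue (transpose V ** V) e"
  shows "e * (norm x)\<^sup>2 \<le> (norm (V *v x))\<^sup>2"
proof -
  obtain u where u: "norm u = 1"
    and minimal: "\<And>x. (norm (V *v u))\<^sup>2 * (norm x)\<^sup>2 \<le> (norm (V *v x))\<^sup>2"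
    using norm_matrix_vector_mult_attains_min_on_sphere[of V] by blast
  have "is_eigenvalue (transpose V ** V) ((norm (V *v u))\<^sup>2)"
    unfolding is_eigenvalue_def
    using norm_minimizer_is_eigenvector[OF u minimal] u by (intro exI[of _ u]) auto
  then have "e \<le> (norm (V *v u))\<^sup>2"
    using assms unfolding is_smallest_eigenvalue_def by blast
  then have "e * (norm x)\<^sup>2 \<le> (norm (V *v u))\<^sup>2 * (norm x)\<^sup>2"
    by (rule mult_right_mono) simp
  then show ?thesis
    using minimal[of x] by (rule order_trans)
qed

lemma abs_matrix_vector_mult_nth_le_dist_to_orthogonal:
  fixes V :: "real^'c^'n"
  assumes "norm u = 1" and "inner u w = 0"
  shows "\<bar>(V *v u) $ i\<bar> \<le> norm (V $ i - w)"
proof -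
  have "(V *v u) $ i = inner (V $ i) u"
    by (simp add: matrix_vector_mult_def inner_vec_def mult.commute)
  also have "\<dots> = inner (V $ i - w) u"
    using assms(2) by (simp add: inner_diff_left inner_commute[of w u])
  finally have "(V *v u) $ i = inner (V $ i - w) u" .
  then show ?thesis
    using Cauchy_Schwarz_ineq2[of "V $ i - w" u] assms(1) by simp
qed

lemma abs_matrix_vector_mult_nth_le_Max_Min_dist_rows:
  fixes V :: "real^'c^'n" and W :: "real^'c^'k"
  assumes "norm u = 1" and "\<And>l. inner u (W $ l) = 0"
  shows "\<bar>(V *v u) $ i\<bar> \<le> Max (range (\<lambda>i. Min (range (\<lambda>l. norm (V $ i - W $ l)))))"
proof -
  have "Min (range (\<lambda>l. norm (V $ i - W $ l))) \<in> range (\<lambda>l. norm (V $ i - W $ l))"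
    by (rule Min_in) simp_all
  then obtain l where l: "Min (range (\<lambda>l. norm (V $ i - W $ l))) = norm (V $ i - W $ l)"
    by blast
  have "\<bar>(V *v u) $ i\<bar> \<le> norm (V $ i - W $ l)"
    using assms by (rule abs_matrix_vector_mult_nth_le_dist_to_orthogonal)
  also have "\<dots> = Min (range (\<lambda>l. norm (V $ i - W $ l)))"
    by (rule l[symmetric])
  also have "\<dots> \<le> Max (range (\<lambda>i. Min (range (\<lambda>l. norm (V $ i - W $ l)))))"
    by (rule Max_ge) simp_all
  finally show ?thesis .
qed

lemma norm_squared_le_card_mult_bound:
  fixes x :: "real^'n"
  assumes "\<And>i. \<bar>x $ i\<bar> \<le> c"
  shows "(norm x)\<^sup>2 \<le> real CARD('n) * c\<^sup>2"
proof -
  have "(norm x)\<^sup>2 = (\<Sum>i\<in>UNIV. (x $ i)\<^sup>2)"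
    by (simp add: norm_vec_def L2_set_def sum_nonneg)
  also have "\<dots> \<le> (\<Sum>i\<in>(UNIV::'n set). c\<^sup>2)"
    by (intro sum_mono) (metis assms abs_ge_zero power2_abs power_mono)
  finally show ?thesis
    by simp
qed

lemma sqrt_le_of_nat_mult_if_le_of_nat_mult_square:
  fixes e x :: real
  assumes "e \<le> real n * x\<^sup>2" and "0 \<le> x"
  shows "sqrt e \<le> real n * x"
proof (rule real_le_lsqrt)
  have "real n \<le> real n * real n"
    by (metis le_square of_nat_le_iff of_nat_mult)
  then have "real n * x\<^sup>2 \<le> (real n * x)\<^sup>2"
    by (simp add: power_mult_distrib power2_eq_square[of "real n"] mult_right_mono)
  with assms(1) show "e \<le> (real n * x)\<^sup>2"
    by (rule order_trans)
qed (use assms in simp)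

theorem corollary8:
  fixes V :: "real^'c^'n" and W :: "real^'c^'k" and e1 eps :: real
  assumes "CARD('c) = CARD('k) + 1"
    and "rank V = CARD('c)"
    and "is_smallest_eigenvalue (transpose V ** V) e1"
    and "e1 > 0"
    and "Max (range (\<lambda>i. Min (range (\<lambda>l. norm (V $ i - W $ l))))) = eps"
  shows "eps \<ge> sqrt e1 / (3 * real CARD('n) * (real CARD('k) + 1)^2)"
proof -
  have "card (range (\<lambda>l. W $ l)) < DIM(real^'c)"
    using card_image_le[of UNIV "\<lambda>l. W $ l"] assms(1) by simp
  then obtain u where u: "norm u = 1" and orth: "\<And>y. y \<in> range (\<lambda>l. W $ l) \<Longrightarrow> inner u y = 0"
    by (rule exists_unit_orthogonal_to_finite_set[rotated]) auto
  have entry: "\<bar>(V *v u) $ i\<bar> \<le> eps" for i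
    unfolding assms(5)[symmetric] using u orth
    by (rule abs_matrix_vector_mult_nth_le_Max_Min_dist_rows) simp
  then have "eps \<ge> 0"
    by (rule order_trans[OF abs_ge_zero])
  have "e1 \<le> (norm (V *v u))\<^sup>2"
    using smallest_eigenvalue_le_norm_matrix_vector_mult[OF assms(3), of u] u by simp
  also have "\<dots> \<le> real CARD('n) * eps\<^sup>2"
    using entry by (rule norm_squared_le_card_mult_bound)
  finally have "sqrt e1 \<le> real CARD('n) * eps"
    using \<open>eps \<ge> 0\<close> by (rule sqrt_le_of_nat_mult_if_le_of_nat_mult_square)
  also have "\<dots> \<le> 3 * real CARD('n) * (real CARD('k) + 1)\<^sup>2 * eps"
  proof (rule mult_right_mono[OF _ \<open>eps \<ge> 0\<close>])
    have "real CARD('n) \<le> real (3 * CARD('n) * (CARD('k) + 1)\<^sup>2)"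
      unfolding of_nat_le_iff by simp
    then show "real CARD('n) \<le> 3 * real CARD('n) * (real CARD('k) + 1)\<^sup>2"
      by (simp add: add.commute)
  qed
  finally show ?thesis
    by (simp add: pos_divide_le_eq mult.commute)
qed

end
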